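(* Let $a,b\ge 2$ be integers and let $G=\mathrm{Sym}(a)\wr\mathrm{Sym}(b)$ with its imprimitive action on $ab$ points. Then \[ \mathbf{m}(G)=\begin{cases} a+b-2 & \text{if } a=3 \text{ and } b \text{ is odd, or } b=3 \text{ and } a \text{ is odd},\\ a+b-1 & \text{otherwise.}\end{cases} \] In particular, if $G$ is a transitive imprimitive permutation group with a block system consisting of $b$ blocks each containing $a$ points, then $\mathbf{m}(G)\le a+b-1$.
   Context: The imprimitive action of $\mathrm{Sym}(a)\wr\mathrm{Sym}(b)$ is on $[a]\times[b]$, with the base group $\mathrm{Sym}(a)^b$ acting coordinatewise within the blocks $[a]\times\{j\}$ and $\mathrm{Sym}(b)$ permuting the blocks. For a transitive permutation group $X$ on a finite set $\Omega$ with $|\Omega|\ge2$, a subset $A\subseteq\Omega$ is self-separable for $X$ if there exists $x\in X$ with $A\cap A^x=\emptyset$; $\mathbf{m}(X)$ is the minimum cardinality of a subset of $\Omega$ that is not self-separable for $X$. *)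

theory Defs
  imports "HOL-Combinatorics.Permutations"
begin

definition self_separable :: "('a \<Rightarrow> 'a) set \<Rightarrow> 'a set \<Rightarrow> bool" where
  "self_separable X A \<longleftrightarrow> (\<exists>x\<in>X. A \<inter> x ` A = {})"

definition min_nonsep :: "('a \<Rightarrow> 'a) set \<Rightarrow> 'a set \<Rightarrow> nat" where
  "min_nonsep X \<Omega> = (LEAST k. \<exists>A \<subseteq> \<Omega>. card A = k \<and> \<not> self_separable X A)"

text \<open>Sym(a) wr Sym(b) in its imprimitive action on [a] x [b] (points {0..<a} x {0..<b}):
  (i,j) is sent to (tau_j(i), sigma(j)).\<close>
definition wreath_imprim :: "nat \<Rightarrow> nat \<Rightarrow> (nat \<times> nat \<Rightarrow> nat \<times> nat) set" where
  "wreath_imprim a b = {f. \<exists>\<sigma> \<tau>. \<sigma> permutes {0..<b} \<and> (\<forall>j. \<tau> j permutes {0..<a}) \<and>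
      f = (\<lambda>(i,j). if i < a \<and> j < b then (\<tau> j i, \<sigma> j) else (i,j))}"

definition perm_group_on :: "('a \<Rightarrow> 'a) set \<Rightarrow> 'a set \<Rightarrow> bool" where
  "perm_group_on G \<Omega> \<longleftrightarrow> G \<noteq> {} \<and> (\<forall>g\<in>G. g permutes \<Omega>) \<and>
     (\<forall>g\<in>G. \<forall>h\<in>G. g \<circ> h \<in> G) \<and> (\<forall>g\<in>G. inv g \<in> G)"

definition transitive_on :: "('a \<Rightarrow> 'a) set \<Rightarrow> 'a set \<Rightarrow> bool" where
  "transitive_on G \<Omega> \<longleftrightarrow> (\<forall>x\<in>\<Omega>. \<forall>y\<in>\<Omega>. \<exists>g\<in>G. g x = y)"

definition block_system :: "('a \<Rightarrow> 'a) set \<Rightarrow> 'a set \<Rightarrow> 'a set set \<Rightarrow> bool" where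
  "block_system G \<Omega> \<B> \<longleftrightarrow> \<Union>\<B> = \<Omega> \<and> {} \<notin> \<B> \<and>
     (\<forall>B1\<in>\<B>. \<forall>B2\<in>\<B>. B1 \<noteq> B2 \<longrightarrow> B1 \<inter> B2 = {}) \<and>
     (\<forall>g\<in>G. \<forall>B\<in>\<B>. g ` B \<in> \<B>)"

end

theory Submission
  imports Defs
begin

text \<open>
  One full block together with one point from each other block is never
  self-separable: an element preserving the block system either fixes that block, which then
  meets its image, or moves it onto another block, whose chosen point lies in the image. This
  gives \<open>a + b - 1\<close> for every block system. For \<open>a = 3\<close> and \<open>b\<close> odd (or \<open>b = 3\<close> and \<open>a\<close> odd)
  the wreath product has the smaller non-self-separable rectangle of two points in each of
  \<open>(b + 1) / 2\<close> blocks (resp. \<open>(a + 1) / 2\<close> points in each of two blocks): more than half of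
  the blocks, and of the points of a block, always meet their images.

  Conversely, if the blocks can be paired by a permutation \<open>\<sigma>\<close> of the blocks so that the
  numbers of points of \<open>A\<close> in \<open>j\<close> and \<open>\<sigma> j\<close> never add up to more than \<open>a\<close>, then the base group
  can move the points of \<open>A\<close> in each block \<open>j\<close> off those in \<open>\<sigma> j\<close>, and \<open>A\<close> is
  self-separable. Pairing the \<open>i\<close>-th smallest count with the \<open>i\<close>-th largest, a
  non-self-separable \<open>A\<close> has two antipodal sorted counts adding up to more than \<open>a\<close>, and
  monotonicity of the sorted counts then bounds \<open>|A|\<close> from below.
\<close>

section \<open>Permutations of finite sets and sorted sequences\<close>

lemma ex_permutes_image_disjoint_iff:
  assumes "finite U" "X \<subseteq> U" "Y \<subseteq> U"
  shows "(\<exists>\<tau>. \<tau> permutes U \<and> \<tau> ` X \<inter> Y = {}) \<longleftrightarrow> card X + card Y \<le> card U"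
proof
  assume "\<exists>\<tau>. \<tau> permutes U \<and> \<tau> ` X \<inter> Y = {}"
  then obtain \<tau> where \<tau>: "\<tau> permutes U" "\<tau> ` X \<inter> Y = {}" by blast
  have "\<tau> ` X \<union> Y \<subseteq> U" using assms permutes_image[OF \<tau>(1)] by blast
  then have "card (\<tau> ` X \<union> Y) \<le> card U" by (rule card_mono[OF assms(1)])
  moreover have "card (\<tau> ` X \<union> Y) = card X + card Y"
    using \<tau> assms finite_subset[OF _ assms(1)] permutes_inj_on[OF \<tau>(1)]
    by (subst card_Un_disjoint) (auto simp: card_image)
  ultimately show "card X + card Y \<le> card U" by simp
next
  assume le: "card X + card Y \<le> card U"
  have fin: "finite X" "finite Y" using assms finite_subset by auto
  have "card X \<le> card (U - Y)" using le assms fin by (simp add: card_Diff_subset)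
  then obtain Z where Z: "Z \<subseteq> U - Y" "card Z = card X"
    by (meson obtain_subset_with_card_n)
  have "finite Z" using Z assms(1) finite_subset by blast
  obtain f where f: "bij_betw f X Z" using finite_same_card_bij fin \<open>finite Z\<close> Z by metis
  have "card (U - X) = card (U - Z)"
  proof -
    have "Z \<subseteq> U" using Z by blast
    then show ?thesis using Z assms fin \<open>finite Z\<close> by (simp add: card_Diff_subset)
  qed
  then obtain g where g: "bij_betw g (U - X) (U - Z)"
    using finite_same_card_bij assms(1) by (metis finite_Diff)
  define \<tau> where "\<tau> = (\<lambda>x. if x \<in> X then f x else if x \<in> U then g x else x)"
  have "bij_betw \<tau> X Z" using f by (rule bij_betw_cong[THEN iffD1, rotated]) (simp add: \<tau>_def)
  moreover have "bij_betw \<tau> (U - X) (U - Z)"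
    using g by (rule bij_betw_cong[THEN iffD1, rotated]) (simp add: \<tau>_def)
  ultimately have "bij_betw \<tau> (X \<union> (U - X)) (Z \<union> (U - Z))"
    by (rule bij_betw_combine) blast
  moreover have "X \<union> (U - X) = U" "Z \<union> (U - Z) = U" using assms Z by auto
  ultimately have "\<tau> permutes U" by (intro bij_imp_permutes) (auto simp: \<tau>_def)
  moreover have "\<tau> ` X \<inter> Y = {}" using f Z by (auto simp: \<tau>_def bij_betw_def)
  ultimately show "\<exists>\<tau>. \<tau> permutes U \<and> \<tau> ` X \<inter> Y = {}" by blast
qed

lemma permutes_image_meets:
  assumes "\<tau> permutes U" "finite U" "X \<subseteq> U" "Y \<subseteq> U" "card U < card X + card Y"
  obtains x where "x \<in> X" "\<tau> x \<in> Y"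
proof -
  have "\<tau> ` X \<inter> Y \<noteq> {}"
    using ex_permutes_image_disjoint_iff[OF assms(2-4)] assms(1,5) by auto
  then show thesis using that by blast
qed

lemma obtain_sorting_bij:
  fixes k :: "nat \<Rightarrow> 'a::linorder"
  obtains p where "bij_betw p {0..<n} {0..<n}" "\<And>i j. i \<le> j \<Longrightarrow> j < n \<Longrightarrow> k (p i) \<le> k (p j)"
proof
  define xs where "xs = sort_key k [0..<n]"
  have "bij_betw ((!) xs) {..<length xs} (set xs)"
    by (rule bij_betw_nth) (simp_all add: xs_def)
  then show "bij_betw ((!) xs) {0..<n} {0..<n}" by (simp add: xs_def atLeast0LessThan)
  have "sorted (map k xs)" by (simp add: xs_def)
  then show "k (xs ! i) \<le> k (xs ! j)" if "i \<le> j" "j < n" for i j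
    using sorted_nth_mono[of "map k xs" i j] that by (simp add: xs_def)
qed

lemma sum_sorted_ge:
  fixes x :: "nat \<Rightarrow> nat"
  assumes sorted: "\<And>i j. i \<le> j \<Longrightarrow> j < b \<Longrightarrow> x i \<le> x j" and "lo \<le> hi" "hi < b"
  shows "(hi - lo) * x lo + (b - hi) * x hi \<le> (\<Sum>t<b. x t)"
proof -
  have "(hi - lo) * x lo \<le> (\<Sum>t\<in>{lo..<hi}. x t)"
    using sum_bounded_below[of "{lo..<hi}" "x lo" x] sorted assms(3) by simp
  moreover have "(b - hi) * x hi \<le> (\<Sum>t\<in>{hi..<b}. x t)"
    using sum_bounded_below[of "{hi..<b}" "x hi" x] sorted by simp
  moreover have "(\<Sum>t\<in>{lo..<hi}. x t) + (\<Sum>t\<in>{hi..<b}. x t) = (\<Sum>t\<in>{lo..<b}. x t)"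
    using assms(2,3) by (simp add: sum.atLeastLessThan_concat)
  moreover have "(\<Sum>t\<in>{lo..<b}. x t) \<le> (\<Sum>t<b. x t)" by (rule sum_mono2) auto
  ultimately show ?thesis by linarith
qed

section \<open>Self-separability and block systems\<close>

lemma min_nonsep_le:
  assumes "A \<subseteq> \<Omega>" "\<not> self_separable X A"
  shows "min_nonsep X \<Omega> \<le> card A"
  unfolding min_nonsep_def by (rule Least_le) (use assms in blast)

lemma min_nonsep_eqI:
  assumes "A \<subseteq> \<Omega>" "\<not> self_separable X A" "card A \<le> k"
    and "\<And>A. A \<subseteq> \<Omega> \<Longrightarrow> \<not> self_separable X A \<Longrightarrow> k \<le> card A"
  shows "min_nonsep X \<Omega> = k"
proof -
  have "\<exists>A' \<subseteq> \<Omega>. card A' = min_nonsep X \<Omega> \<and> \<not> self_separable X A'"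
    unfolding min_nonsep_def by (rule LeastI[of _ "card A"]) (use assms(1,2) in blast)
  then have "k \<le> min_nonsep X \<Omega>" using assms(4) by metis
  moreover have "min_nonsep X \<Omega> \<le> k" using min_nonsep_le[OF assms(1,2)] assms(3) by simp
  ultimately show ?thesis by simp
qed

lemma block_transversal_not_self_separable:
  assumes blocks: "block_system G \<Omega> \<B>" and "finite \<B>" "B\<^sub>0 \<in> \<B>"
  obtains A where "A \<subseteq> \<Omega>" "card A \<le> card B\<^sub>0 + card \<B> - 1" "\<not> self_separable G A"
proof
  define A where "A = B\<^sub>0 \<union> (\<lambda>B. SOME x. x \<in> B) ` (\<B> - {B\<^sub>0})"
  have nonempty: "B \<noteq> {}" if "B \<in> \<B>" for B
    using blocks that unfolding block_system_def by auto
  then have chosen: "(SOME x. x \<in> B) \<in> B" if "B \<in> \<B>" for B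
    using that by (simp add: some_in_eq)
  have "\<Union>\<B> = \<Omega>" using blocks unfolding block_system_def by blast
  then show "A \<subseteq> \<Omega>" using \<open>B\<^sub>0 \<in> \<B>\<close> chosen unfolding A_def by blast
  have "card A \<le> card B\<^sub>0 + card ((\<lambda>B. SOME x. x \<in> B) ` (\<B> - {B\<^sub>0}))"
    unfolding A_def by (rule card_Un_le)
  also have "\<dots> \<le> card B\<^sub>0 + card (\<B> - {B\<^sub>0})" by (simp add: card_image_le \<open>finite \<B>\<close>)
  also have "\<dots> = card B\<^sub>0 + card \<B> - 1"
    using card_gt_0_iff[of \<B>] \<open>finite \<B>\<close> \<open>B\<^sub>0 \<in> \<B>\<close> by force
  finally show "card A \<le> card B\<^sub>0 + card \<B> - 1" .
  show "\<not> self_separable G A"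
    unfolding self_separable_def
  proof
    assume "\<exists>g\<in>G. A \<inter> g ` A = {}"
    then obtain g where g: "g \<in> G" "A \<inter> g ` A = {}" by blast
    have gB: "g ` B\<^sub>0 \<in> \<B>" using blocks g(1) \<open>B\<^sub>0 \<in> \<B>\<close> unfolding block_system_def by simp
    have "g ` B\<^sub>0 \<subseteq> g ` A" unfolding A_def by blast
    show False
    proof (cases "g ` B\<^sub>0 = B\<^sub>0")
      case True
      then have "B\<^sub>0 \<subseteq> A \<inter> g ` A" unfolding A_def by auto
      then show False using g nonempty[OF \<open>B\<^sub>0 \<in> \<B>\<close>] by auto
    next
      case False
      then have "(SOME x. x \<in> g ` B\<^sub>0) \<in> A" unfolding A_def using gB by blast
      moreover have "(SOME x. x \<in> g ` B\<^sub>0) \<in> g ` A" using chosen[OF gB] \<open>g ` B\<^sub>0 \<subseteq> g ` A\<close> by blast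
      ultimately show False using g by blast
    qed
  qed
qed

lemma min_nonsep_block_system_le:
  assumes "block_system G \<Omega> \<B>" "finite \<B>" "B\<^sub>0 \<in> \<B>"
  shows "min_nonsep G \<Omega> \<le> card B\<^sub>0 + card \<B> - 1"
proof -
  obtain A where "A \<subseteq> \<Omega>" "card A \<le> card B\<^sub>0 + card \<B> - 1" "\<not> self_separable G A"
    using block_transversal_not_self_separable[OF assms] .
  then show ?thesis using min_nonsep_le[of A \<Omega> G] by simp
qed

section \<open>The imprimitive wreath product\<close>

lemma wreath_imprimE:
  assumes "f \<in> wreath_imprim a b"
  obtains \<sigma> \<tau> where "\<sigma> permutes {0..<b}" "\<And>j. \<tau> j permutes {0..<a}"
    "\<And>i j. i < a \<Longrightarrow> j < b \<Longrightarrow> f (i, j) = (\<tau> j i, \<sigma> j)"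
proof -
  from assms obtain \<sigma> \<tau> where "\<sigma> permutes {0..<b}" "\<forall>j. \<tau> j permutes {0..<a}"
    "f = (\<lambda>(i, j). if i < a \<and> j < b then (\<tau> j i, \<sigma> j) else (i, j))"
    unfolding wreath_imprim_def by blast
  with that[of \<sigma> \<tau>] show thesis by auto
qed

lemma wreath_imprimI:
  assumes "\<sigma> permutes {0..<b}" "\<And>j. j < b \<Longrightarrow> \<tau> j permutes {0..<a}"
  shows "(\<lambda>(i, j). if i < a \<and> j < b then (\<tau> j i, \<sigma> j) else (i, j)) \<in> wreath_imprim a b"
proof -
  define \<tau>' where "\<tau>' j = (if j < b then \<tau> j else id)" for j
  have "\<forall>j. \<tau>' j permutes {0..<a}" using assms(2) by (simp add: \<tau>'_def)
  moreover have "(\<lambda>(i, j). if i < a \<and> j < b then (\<tau> j i, \<sigma> j) else (i, j)) =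
      (\<lambda>(i, j). if i < a \<and> j < b then (\<tau>' j i, \<sigma> j) else (i, j))"
    by (auto simp: \<tau>'_def)
  ultimately show ?thesis using assms(1) unfolding wreath_imprim_def by (intro CollectI exI conjI) auto
qed

lemma wreath_imprim_block_system:
  fixes a :: nat
  assumes "1 \<le> a"
  shows "block_system (wreath_imprim a b) ({0..<a} \<times> {0..<b}) ((\<lambda>j. {0..<a} \<times> {j}) ` {0..<b})"
proof -
  have "f ` ({0..<a} \<times> {j}) \<in> (\<lambda>j. {0..<a} \<times> {j}) ` {0..<b}"
    if "f \<in> wreath_imprim a b" "j < b" for f j
  proof -
    obtain \<sigma> \<tau> where \<sigma>: "\<sigma> permutes {0..<b}" and \<tau>: "\<And>j. \<tau> j permutes {0..<a}"
      and f: "\<And>i j. i < a \<Longrightarrow> j < b \<Longrightarrow> f (i, j) = (\<tau> j i, \<sigma> j)"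
      using \<open>f \<in> wreath_imprim a b\<close> by (rule wreath_imprimE) blast
    have "f ` ({0..<a} \<times> {j}) = \<tau> j ` {0..<a} \<times> {\<sigma> j}" using f \<open>j < b\<close> by force
    also have "\<dots> = {0..<a} \<times> {\<sigma> j}" by (simp add: permutes_image[OF \<tau>])
    finally show ?thesis using permutes_in_image[OF \<sigma>] \<open>j < b\<close> by simp
  qed
  moreover have "{} \<notin> (\<lambda>j. {0..<a} \<times> {j}) ` {0..<b}"
  proof
    assume "{} \<in> (\<lambda>j. {0..<a} \<times> {j}) ` {0..<b}"
    then obtain j :: nat where "{} = {0..<a} \<times> {j}" by blast
    moreover have "(0, j) \<in> {0..<a} \<times> {j}" using assms by simp
    ultimately show False by blast
  qed
  ultimately show ?thesis unfolding block_system_def by auto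
qed

lemma card_wreath_imprim_blocks:
  fixes a :: nat
  assumes "1 \<le> a"
  shows "card ((\<lambda>j. {0..<a} \<times> {j}) ` {0..<b}) = b"
proof -
  have "inj_on (\<lambda>j. {0..<a} \<times> {j}) {0..<b}"
  proof (rule inj_onI)
    fix x y :: nat
    assume eq: "{0..<a} \<times> {x} = {0..<a} \<times> {y}"
    have "(0, x) \<in> {0..<a} \<times> {x}" using assms by simp
    then show "x = y" unfolding eq by simp
  qed
  then show ?thesis by (simp add: card_image)
qed

lemma rectangle_not_self_separable:
  assumes "a < 2 * c" "c \<le> a" "b < 2 * m" "m \<le> b"
  shows "\<not> self_separable (wreath_imprim a b) ({0..<c} \<times> {0..<m})"
  unfolding self_separable_def
proof
  assume "\<exists>f\<in>wreath_imprim a b. {0..<c} \<times> {0..<m} \<inter> f ` ({0..<c} \<times> {0..<m}) = {}"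
  then obtain f where f_mem: "f \<in> wreath_imprim a b"
    and disjoint: "{0..<c} \<times> {0..<m} \<inter> f ` ({0..<c} \<times> {0..<m}) = {}" by blast
  from f_mem obtain \<sigma> \<tau> where \<sigma>: "\<sigma> permutes {0..<b}" and \<tau>: "\<And>j. \<tau> j permutes {0..<a}"
    and f: "\<And>i j. i < a \<Longrightarrow> j < b \<Longrightarrow> f (i, j) = (\<tau> j i, \<sigma> j)"
    by (rule wreath_imprimE) blast
  obtain j where j: "j < m" "\<sigma> j < m"
    by (rule permutes_image_meets[OF \<sigma>, of "{0..<m}" "{0..<m}"]) (use assms(3,4) in auto)
  obtain i where i: "i < c" "\<tau> j i < c"
    by (rule permutes_image_meets[OF \<tau>, of "{0..<c}" "{0..<c}"]) (use assms(1,2) in auto)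
  have "(i, j) \<in> {0..<c} \<times> {0..<m}" using i j by simp
  moreover have "f (i, j) \<in> {0..<c} \<times> {0..<m}" using i j f assms by simp
  ultimately have "f (i, j) \<in> {0..<c} \<times> {0..<m} \<inter> f ` ({0..<c} \<times> {0..<m})" by blast
  then show False using disjoint by simp
qed

lemma wreath_imprim_small_not_self_separable:
  assumes "2 \<le> a" "2 \<le> b"
  obtains A where "A \<subseteq> {0..<a} \<times> {0..<b}" "\<not> self_separable (wreath_imprim a b) A"
    "card A \<le> (if (a = 3 \<and> odd b) \<or> (b = 3 \<and> odd a) then a + b - 2 else a + b - 1)"
proof (cases "(a = 3 \<and> odd b) \<or> (b = 3 \<and> odd a)")
  case True
  then consider "a = 3" "odd b" | "b = 3" "odd a" by blast
  then show thesis
  proof cases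
    case 1
    have "\<not> self_separable (wreath_imprim a b) ({0..<2} \<times> {0..<(b + 1) div 2})"
      by (rule rectangle_not_self_separable) (use 1 assms in presburger)+
    moreover have "{0..<2} \<times> {0..<(b + 1) div 2} \<subseteq> {0..<a} \<times> {0..<b}"
      using 1 assms by auto
    moreover have "card ({0..<2::nat} \<times> {0..<(b + 1) div 2}) = a + b - 2"
      using 1 by (simp add: card_cartesian_product)
    ultimately show thesis using True by (intro that[of "{0..<2} \<times> {0..<(b + 1) div 2}"]) simp_all
  next
    case 2
    have "\<not> self_separable (wreath_imprim a b) ({0..<(a + 1) div 2} \<times> {0..<2})"
      by (rule rectangle_not_self_separable) (use 2 assms in presburger)+
    moreover have "{0..<(a + 1) div 2} \<times> {0..<2} \<subseteq> {0..<a} \<times> {0..<b}"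
      using 2 assms by auto
    moreover have "card ({0..<(a + 1) div 2} \<times> {0..<2::nat}) = a + b - 2"
      using 2 by (simp add: card_cartesian_product, presburger)
    ultimately show thesis using True by (intro that[of "{0..<(a + 1) div 2} \<times> {0..<2}"]) simp_all
  qed
next
  case False
  have "1 \<le> a" using assms by simp
  let ?blocks = "(\<lambda>j. {0..<a} \<times> {j}) ` {0..<b}"
  have "{0..<a} \<times> {0} \<in> ?blocks" using assms by auto
  then obtain A where "A \<subseteq> {0..<a} \<times> {0..<b}" "\<not> self_separable (wreath_imprim a b) A"
    "card A \<le> card ({0..<a} \<times> {0::nat}) + card ?blocks - 1"
    by (rule block_transversal_not_self_separable[OF wreath_imprim_block_system[OF \<open>1 \<le> a\<close>]
          finite_imageI[OF finite_atLeastLessThan]]) blast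
  then show thesis
    using that False card_wreath_imprim_blocks[OF \<open>1 \<le> a\<close>] by (simp add: card_cartesian_product)
qed

section \<open>The lower bound\<close>

definition block_count :: "(nat \<times> nat) set \<Rightarrow> nat \<Rightarrow> nat" where
  "block_count A j = card {i. (i, j) \<in> A}"

lemma block_count_le:
  assumes "A \<subseteq> {0..<a} \<times> {0..<b}"
  shows "block_count A j \<le> a"
proof -
  have "{i. (i, j) \<in> A} \<subseteq> {0..<a}" using assms by auto
  then show ?thesis unfolding block_count_def using card_mono[of "{0..<a}"] by fastforce
qed

lemma card_eq_sum_block_count:
  assumes "A \<subseteq> {0..<a} \<times> {0..<b}"
  shows "card A = (\<Sum>j<b. block_count A j)"
proof -
  have A: "A = (\<Union>j<b. (\<lambda>i. (i, j)) ` {i. (i, j) \<in> A})" using assms by (auto simp: image_iff)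
  have "finite {i. (i, j) \<in> A}" for j
    by (rule finite_subset[of _ "{0..<a}"]) (use assms in auto)
  then have "card A = (\<Sum>j<b. card ((\<lambda>i. (i, j)) ` {i. (i, j) \<in> A}))"
    by (subst A, intro card_UN_disjoint) auto
  also have "\<dots> = (\<Sum>j<b. block_count A j)"
    by (intro sum.cong) (auto simp: block_count_def card_image inj_on_def)
  finally show ?thesis .
qed

lemma self_separable_if_block_counts_fit:
  assumes A: "A \<subseteq> {0..<a} \<times> {0..<b}" and \<sigma>: "\<sigma> permutes {0..<b}"
    and fit: "\<And>j. j < b \<Longrightarrow> block_count A j + block_count A (\<sigma> j) \<le> a"
  shows "self_separable (wreath_imprim a b) A"
proof -
  let ?P = "\<lambda>j t. t permutes {0..<a} \<and> t ` {i. (i, j) \<in> A} \<inter> {i. (i, \<sigma> j) \<in> A} = {}"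
  define \<tau> where "\<tau> j = (SOME t. ?P j t)" for j
  have \<tau>: "?P j (\<tau> j)" if "j < b" for j
  proof -
    have "\<exists>t. ?P j t"
      using ex_permutes_image_disjoint_iff[of "{0..<a}" "{i. (i, j) \<in> A}" "{i. (i, \<sigma> j) \<in> A}"]
        fit[OF that] A by (auto simp: block_count_def)
    then show ?thesis unfolding \<tau>_def by (rule someI_ex)
  qed
  define f where "f = (\<lambda>(i, j). if i < a \<and> j < b then (\<tau> j i, \<sigma> j) else (i, j))"
  have "f \<in> wreath_imprim a b" unfolding f_def using \<sigma> \<tau> by (intro wreath_imprimI) auto
  moreover have "A \<inter> f ` A = {}"
  proof (rule ccontr)
    assume "A \<inter> f ` A \<noteq> {}"
    then obtain i j where ij: "(i, j) \<in> A" "f (i, j) \<in> A" by auto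
    then have "i < a" "j < b" using A by auto
    then have "f (i, j) = (\<tau> j i, \<sigma> j)" by (simp add: f_def)
    then show False using \<tau>[OF \<open>j < b\<close>] ij by auto
  qed
  ultimately show ?thesis unfolding self_separable_def by blast
qed

lemma not_self_separable_antipodal_blocks:
  assumes A: "A \<subseteq> {0..<a} \<times> {0..<b}" and "\<not> self_separable (wreath_imprim a b) A"
    and p: "bij_betw p {0..<b} {0..<b}"
  obtains i where "i < b" "a < block_count A (p i) + block_count A (p (b - 1 - i))"
proof -
  define r where "r i = (if i < b then b - 1 - i else i)" for i
  have "bij_betw r {0..<b} {0..<b}" by (rule bij_betw_byWitness[where f' = r]) (auto simp: r_def)
  then have "r permutes {0..<b}" by (rule bij_imp_permutes) (simp add: r_def)
  \<comment> \<open>\<open>\<sigma>\<close> pairs block \<open>p i\<close> with block \<open>p (b - 1 - i)\<close>.\<close>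
  define \<sigma> where "\<sigma> x = (if x \<in> {0..<b} then p (r (inv_into {0..<b} p x)) else x)" for x
  have "\<sigma> permutes {0..<b}"
    unfolding \<sigma>_def by (rule permutes_bij_inv_into[OF \<open>r permutes {0..<b}\<close> p])
  then have "\<not> (\<forall>j<b. block_count A j + block_count A (\<sigma> j) \<le> a)"
    using self_separable_if_block_counts_fit[OF A] assms(2) by blast
  then obtain j where j: "j < b" "a < block_count A j + block_count A (\<sigma> j)" by auto
  define i where "i = inv_into {0..<b} p j"
  have "i < b" using j(1) p inv_into_into[of j p "{0..<b}"] by (simp add: i_def bij_betw_def)
  moreover have "p i = j" using j(1) p by (simp add: i_def bij_betw_inv_into_right)
  moreover have "\<sigma> j = p (b - 1 - i)" using j(1) by (simp add: \<sigma>_def r_def i_def[symmetric] \<open>i < b\<close>)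
  ultimately show thesis using that j(2) by simp
qed

lemma antipodal_bound_off_centre:
  fixes a n m x y :: nat
  assumes "2 \<le> a" "1 \<le> n" "1 \<le> m" "x \<le> y" "y \<le> a" "a < x + y"
  shows "a + n + 2 * m \<le> n * x + m * y + 2"
proof -
  have "1 \<le> x" "2 \<le> y" using assms by linarith+
  have "n + x \<le> n * x + 1"
  proof -
    obtain n' where "n = Suc n'" using \<open>1 \<le> n\<close> by (cases n) auto
    moreover obtain x' where "x = Suc x'" using \<open>1 \<le> x\<close> by (cases x) auto
    ultimately show ?thesis by simp
  qed
  moreover have "y + 2 * (m - 1) \<le> m * y"
  proof -
    obtain m' where "m = Suc m'" using \<open>1 \<le> m\<close> by (cases m) auto
    then show ?thesis using \<open>2 \<le> y\<close> by simp
  qed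
  ultimately show ?thesis using assms by linarith
qed

lemma antipodal_bound_centre:
  fixes a m y :: nat
  assumes "2 \<le> m" "2 \<le> y" "a < 2 * y"
  shows "a + 2 * m \<le> m * y + 3"
    and "a \<noteq> 3 \<Longrightarrow> \<not> (m = 2 \<and> odd a) \<Longrightarrow> a + 2 * m \<le> m * y + 2"
proof -
  obtain d where y: "y = d + 2" using assms(2) by (metis le_add_diff_inverse2)
  have my: "m * y = m * d + 2 * m" unfolding y by (simp add: algebra_simps)
  have a: "a < 2 * d + 4" using assms(3) unfolding y by simp
  have "2 * d \<le> m * d" using assms(1) by simp
  then show "a + 2 * m \<le> m * y + 3" using a my by linarith
  assume "a \<noteq> 3" "\<not> (m = 2 \<and> odd a)"
  show "a + 2 * m \<le> m * y + 2"
  proof (cases "m = 2")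
    case True
    then have "even a" using \<open>\<not> (m = 2 \<and> odd a)\<close> by simp
    then have "a + 2 \<le> 2 * y" using assms(3) by presburger
    then show ?thesis using True by simp
  next
    case False
    then have "3 * d \<le> m * d" using assms(1) by simp
    moreover have "a \<le> 3 * d + 2" using a \<open>a \<noteq> 3\<close> by linarith
    ultimately show ?thesis using my by linarith
  qed
qed

lemma antipodal_sum_bound:
  fixes x :: "nat \<Rightarrow> nat"
  assumes "2 \<le> a" "2 \<le> b"
    and sorted: "\<And>i j. i \<le> j \<Longrightarrow> j < b \<Longrightarrow> x i \<le> x j"
    and bounded: "\<And>i. i < b \<Longrightarrow> x i \<le> a"
    and "i < b" "a < x i + x (b - 1 - i)"
  shows "(if (a = 3 \<and> odd b) \<or> (b = 3 \<and> odd a) then a + b - 2 else a + b - 1) \<le> (\<Sum>t<b. x t)"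
proof -
  define lo where "lo = min i (b - 1 - i)"
  define hi where "hi = b - 1 - lo"
  have "lo \<le> hi" "hi < b" "b - hi = lo + 1" using \<open>i < b\<close> by (auto simp: lo_def hi_def)
  have heavy: "a < x lo + x hi"
    using assms(6) \<open>i < b\<close> by (cases "i \<le> b - 1 - i") (auto simp: lo_def hi_def min_def)
  have "x lo \<le> x hi" "x hi \<le> a" using sorted bounded \<open>lo \<le> hi\<close> \<open>hi < b\<close> by auto
  \<comment> \<open>The \<open>hi - lo\<close> counts from \<open>lo\<close> on are at least \<open>x lo\<close>, the \<open>lo + 1\<close> counts from \<open>hi\<close>
    on at least \<open>x hi\<close>; the two bounds below treat \<open>lo < hi\<close> and \<open>lo = hi\<close>.\<close>
  have sum: "(hi - lo) * x lo + (lo + 1) * x hi \<le> (\<Sum>t<b. x t)"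
    using sum_sorted_ge[OF sorted \<open>lo \<le> hi\<close> \<open>hi < b\<close>] \<open>b - hi = lo + 1\<close> by simp
  show ?thesis
  proof (cases "lo < hi")
    case True
    have "a + (hi - lo) + 2 * (lo + 1) \<le> (hi - lo) * x lo + (lo + 1) * x hi + 2"
      using True heavy \<open>x lo \<le> x hi\<close> \<open>x hi \<le> a\<close> assms(1) by (intro antipodal_bound_off_centre) auto
    then show ?thesis using sum \<open>hi < b\<close> unfolding hi_def by auto
  next
    case False
    then have "lo = hi" "b = 2 * lo + 1" using \<open>lo \<le> hi\<close> \<open>hi < b\<close> unfolding hi_def by auto
    then have "2 \<le> lo + 1" "a < 2 * x hi" "odd b" using assms(2) heavy by auto
    moreover have "2 \<le> x hi" using \<open>a < 2 * x hi\<close> assms(1) by linarith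
    ultimately have "a + 2 * (lo + 1) \<le> (lo + 1) * x hi + 3"
      and "a \<noteq> 3 \<Longrightarrow> \<not> (lo + 1 = 2 \<and> odd a) \<Longrightarrow> a + 2 * (lo + 1) \<le> (lo + 1) * x hi + 2"
      using antipodal_bound_centre by blast+
    then show ?thesis using sum \<open>lo = hi\<close> \<open>b = 2 * lo + 1\<close> by auto
  qed
qed

lemma wreath_imprim_card_ge_if_not_self_separable:
  assumes "2 \<le> a" "2 \<le> b" and A: "A \<subseteq> {0..<a} \<times> {0..<b}"
    and "\<not> self_separable (wreath_imprim a b) A"
  shows "(if (a = 3 \<and> odd b) \<or> (b = 3 \<and> odd a) then a + b - 2 else a + b - 1) \<le> card A"
proof -
  obtain p where p: "bij_betw p {0..<b} {0..<b}"
    and sorted: "\<And>i j. i \<le> j \<Longrightarrow> j < b \<Longrightarrow> block_count A (p i) \<le> block_count A (p j)"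
    by (rule obtain_sorting_bij[of b "block_count A"]) blast
  obtain i where "i < b" "a < block_count A (p i) + block_count A (p (b - 1 - i))"
    using not_self_separable_antipodal_blocks[OF A assms(4) p] .
  moreover have "card A = (\<Sum>t<b. block_count A (p t))"
    using card_eq_sum_block_count[OF A] sum.reindex_bij_betw[OF p, of "block_count A"]
    by (simp add: atLeast0LessThan)
  ultimately show ?thesis
    using antipodal_sum_bound[OF assms(1,2), of "\<lambda>t. block_count A (p t)"] sorted
      block_count_le[OF A] by simp
qed

theorem theoremE:
  fixes a b :: nat
  assumes "a \<ge> 2" and "b \<ge> 2"
  shows "min_nonsep (wreath_imprim a b) ({0..<a} \<times> {0..<b}) =
           (if (a = 3 \<and> odd b) \<or> (b = 3 \<and> odd a) then a + b - 2 else a + b - 1)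
         \<and> (\<forall>(G :: ('x \<Rightarrow> 'x) set) \<Omega> \<B>.
               finite \<Omega> \<and> perm_group_on G \<Omega> \<and> transitive_on G \<Omega> \<and>
               block_system G \<Omega> \<B> \<and> card \<B> = b \<and> (\<forall>B\<in>\<B>. card B = a)
               \<longrightarrow> min_nonsep G \<Omega> \<le> a + b - 1)"
proof (intro conjI allI impI)
  obtain A where "A \<subseteq> {0..<a} \<times> {0..<b}" "\<not> self_separable (wreath_imprim a b) A"
    "card A \<le> (if (a = 3 \<and> odd b) \<or> (b = 3 \<and> odd a) then a + b - 2 else a + b - 1)"
    using wreath_imprim_small_not_self_separable[OF assms] .
  then show "min_nonsep (wreath_imprim a b) ({0..<a} \<times> {0..<b}) =
      (if (a = 3 \<and> odd b) \<or> (b = 3 \<and> odd a) then a + b - 2 else a + b - 1)"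
    using wreath_imprim_card_ge_if_not_self_separable[OF assms] by (intro min_nonsep_eqI)
next
  fix G :: "('x \<Rightarrow> 'x) set" and \<Omega> \<B>
  assume "finite \<Omega> \<and> perm_group_on G \<Omega> \<and> transitive_on G \<Omega> \<and>
    block_system G \<Omega> \<B> \<and> card \<B> = b \<and> (\<forall>B\<in>\<B>. card B = a)"
  then have blocks: "block_system G \<Omega> \<B>" and "card \<B> = b" and "\<forall>B\<in>\<B>. card B = a" by auto
  then have "finite \<B>" "\<B> \<noteq> {}" using assms(2) by (auto intro: card_ge_0_finite)
  then obtain B\<^sub>0 where "B\<^sub>0 \<in> \<B>" by blast
  then show "min_nonsep G \<Omega> \<le> a + b - 1"
    using min_nonsep_block_system_le[OF blocks \<open>finite \<B>\<close>] \<open>card \<B> = b\<close> \<open>\<forall>B\<in>\<B>. card B = a\<close> by simp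
qed

end
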